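(* Let $\mathscr{U}$ be a normal ultrafilter over $\kappa$. Assume $2^\kappa=\lambda$ and that $\mathrm{Gal}(\mathscr{U},\partial,\partial)$ holds for every cardinal $\partial$ with $\kappa^+\leq\partial<\lambda$. Then there is a strong generating sequence $\mathcal{B}=\langle B_\alpha\mid\alpha<\lambda\rangle$ for $\mathscr{U}$.
   Context: $A\subseteq^*B$ means $A\setminus B$ is bounded in $\kappa$. A strong generating sequence for a filter $\mathcal{F}$ over $\kappa$ is a sequence $\langle B_\alpha\mid\alpha<\lambda\rangle$ of members of $\mathcal{F}$ which is $\subseteq^*$-decreasing ($\alpha\leq\beta$ implies $B_\beta\subseteq^*B_\alpha$) and such that for every $X\in\mathcal{F}$ there is $\alpha<\lambda$ with $B_\alpha\subseteq^*X$. $\mathrm{Gal}(\mathcal{F},\mu,\lambda)$: for every $\mathcal{C}\subseteq\mathcal{F}$ with $|\mathcal{C}|=\lambda$ there is $\mathcal{E}\subseteq\mathcal{C}$ with $|\mathcal{E}|=\mu$ and $\bigcap\mathcal{E}\in\mathcal{F}$. *)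

theory Defs
  imports Main
begin

text \<open>The cardinal kappa is represented by a cardinal (initial-ordinal) well-order r
  on its carrier Field r; the ordinal order of kappa is r.\<close>

definition bounded_in :: "'k rel \<Rightarrow> 'k set \<Rightarrow> bool" where
  "bounded_in r A \<longleftrightarrow> A \<subseteq> Field r \<and> (\<exists>\<beta>\<in>Field r. \<forall>\<alpha>\<in>A. (\<alpha>, \<beta>) \<in> r \<and> \<alpha> \<noteq> \<beta>)"

definition almost_subset :: "'k rel \<Rightarrow> 'k set \<Rightarrow> 'k set \<Rightarrow> bool" where
  "almost_subset r A B \<longleftrightarrow> bounded_in r (A - B)"

definition ultrafilter_on :: "'k set \<Rightarrow> 'k set set \<Rightarrow> bool" where
  "ultrafilter_on K U \<longleftrightarrow>
     U \<subseteq> Pow K \<and> K \<in> U \<and> {} \<notin> U \<and>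
     (\<forall>X\<in>U. \<forall>Y. X \<subseteq> Y \<and> Y \<subseteq> K \<longrightarrow> Y \<in> U) \<and>
     (\<forall>X\<in>U. \<forall>Y\<in>U. X \<inter> Y \<in> U) \<and>
     (\<forall>X. X \<subseteq> K \<longrightarrow> X \<in> U \<or> K - X \<in> U)"

definition kappa_complete :: "'k rel \<Rightarrow> 'k set set \<Rightarrow> bool" where
  "kappa_complete r U \<longleftrightarrow>
     (\<forall>F. F \<subseteq> U \<and> F \<noteq> {} \<and> (card_of F, card_of (Field r)) \<in> ordLess \<longrightarrow> \<Inter>F \<in> U)"

definition nonprincipal :: "'k rel \<Rightarrow> 'k set set \<Rightarrow> bool" where
  "nonprincipal r U \<longleftrightarrow> (\<forall>\<alpha>\<in>Field r. {\<alpha>} \<notin> U)"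

definition diag_inter :: "'k rel \<Rightarrow> ('k \<Rightarrow> 'k set) \<Rightarrow> 'k set" where
  "diag_inter r X = {\<alpha> \<in> Field r. \<forall>\<beta>. (\<beta>, \<alpha>) \<in> r \<and> \<beta> \<noteq> \<alpha> \<longrightarrow> \<alpha> \<in> X \<beta>}"

definition normal_ultrafilter :: "'k rel \<Rightarrow> 'k set set \<Rightarrow> bool" where
  "normal_ultrafilter r U \<longleftrightarrow>
     Card_order r \<and> ultrafilter_on (Field r) U \<and> kappa_complete r U \<and> nonprincipal r U \<and>
     (\<forall>X. (\<forall>\<beta>\<in>Field r. X \<beta> \<in> U) \<longrightarrow> diag_inter r X \<in> U)"

definition Gal :: "'k set set \<Rightarrow> 'a rel \<Rightarrow> 'b rel \<Rightarrow> bool" where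
  "Gal U mu lam \<longleftrightarrow>
     (\<forall>C. C \<subseteq> U \<and> (card_of C, lam) \<in> ordIso \<longrightarrow>
        (\<exists>E. E \<subseteq> C \<and> (card_of E, mu) \<in> ordIso \<and> \<Inter>E \<in> U))"

definition strong_generating_seq :: "'k rel \<Rightarrow> 'k set set \<Rightarrow> 'l rel \<Rightarrow> ('l \<Rightarrow> 'k set) \<Rightarrow> bool" where
  "strong_generating_seq r U l B \<longleftrightarrow>
     (\<forall>\<alpha>\<in>Field l. B \<alpha> \<in> U) \<and>
     (\<forall>\<alpha>\<in>Field l. \<forall>\<beta>\<in>Field l. (\<alpha>, \<beta>) \<in> l \<longrightarrow> almost_subset r (B \<beta>) (B \<alpha>)) \<and>
     (\<forall>X\<in>U. \<exists>\<alpha>\<in>Field l. almost_subset r (B \<alpha>) X)"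

end

(*
  Enumerate U as X_\<alpha>, \<alpha> < \<lambda> (possible since |U| \<le> 2^\<kappa> = \<lambda>), and choose B_\<alpha> \<in> U by
  transfinite recursion almost below X_\<alpha> and all earlier B_\<beta>. The recursion never gets stuck
  because every \<subseteq>*-decreasing sequence in U of length < \<lambda> has a pseudo-intersection in U.
  To see this, pass to a cofinal subsequence of minimal length \<theta> all of whose proper initial
  segments have fewer than \<theta> terms. If \<theta> \<le> \<kappa>, a diagonal intersection works by normality.
  If \<theta> > \<kappa> and the subsequence takes fewer than \<theta> values, one value recurs cofinally and
  is itself a pseudo-intersection. Otherwise Gal(U,\<theta>,\<theta>) gives \<theta> of its terms whose
  intersection lies in U; these cannot fit into a proper initial segment, so they are cofinal,
  and their intersection is the required pseudo-intersection.
*)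

theory Submission
  imports Defs
begin

unbundle cardinal_syntax

lemma bounded_in_iff_underS: "bounded_in r A \<longleftrightarrow> (\<exists>\<beta>\<in>Field r. A \<subseteq> underS r \<beta>)"
  unfolding bounded_in_def underS_def Field_def by blast

lemma bounded_in_subset: "A \<subseteq> A' \<Longrightarrow> bounded_in r A' \<Longrightarrow> bounded_in r A"
  unfolding bounded_in_def by blast

lemma bounded_in_Un:
  assumes "Well_order r" "bounded_in r A" "bounded_in r A'"
  shows "bounded_in r (A \<union> A')"
proof -
  obtain \<beta> \<beta>' where \<beta>: "\<beta> \<in> Field r" "\<beta>' \<in> Field r" "A \<subseteq> underS r \<beta>" "A' \<subseteq> underS r \<beta>'"
    using assms(2,3) unfolding bounded_in_iff_underS by blast
  have incr: "underS r \<gamma> \<subseteq> underS r \<gamma>'" if "(\<gamma>, \<gamma>') \<in> r" for \<gamma> \<gamma>'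
    using underS_incr[OF wo_rel.TRANS wo_rel.ANTISYM that] assms(1) unfolding wo_rel_def by blast
  have "(\<beta>, \<beta>') \<in> r \<or> (\<beta>', \<beta>) \<in> r"
    using wo_rel.TOTALS \<beta>(1,2) assms(1) unfolding wo_rel_def by blast
  then show ?thesis
  proof
    assume "(\<beta>, \<beta>') \<in> r"
    then have "A \<union> A' \<subseteq> underS r \<beta>'" using incr \<beta>(3,4) by blast
    then show ?thesis using \<beta>(2) unfolding bounded_in_iff_underS by blast
  next
    assume "(\<beta>', \<beta>) \<in> r"
    then have "A \<union> A' \<subseteq> underS r \<beta>" using incr \<beta>(3,4) by blast
    then show ?thesis using \<beta>(1) unfolding bounded_in_iff_underS by blast
  qed
qed

lemma bounded_in_under:
  assumes "Card_order r" "infinite (Field r)" "\<gamma> \<in> Field r"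
  shows "bounded_in r (under r \<gamma>)"
proof -
  have "trans r" "antisym r"
    using assms(1) wo_rel.TRANS wo_rel.ANTISYM unfolding wo_rel_def card_order_on_def by blast+
  obtain \<beta> where "\<beta> \<in> Field r" "\<gamma> \<noteq> \<beta>" "(\<gamma>, \<beta>) \<in> r"
    using infinite_Card_order_limit[OF assms] by blast
  then have "under r \<gamma> \<subseteq> underS r \<beta>"
    using \<open>trans r\<close> \<open>antisym r\<close> unfolding under_def underS_def antisym_def trans_def by blast
  then show ?thesis using \<open>\<beta> \<in> Field r\<close> unfolding bounded_in_iff_underS by blast
qed

lemma subset_imp_almost_subset: "Field r \<noteq> {} \<Longrightarrow> A \<subseteq> B \<Longrightarrow> almost_subset r A B"
  unfolding almost_subset_def bounded_in_def by auto

lemma almost_subset_trans: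
  assumes "Well_order r" "almost_subset r A B" "almost_subset r B C"
  shows "almost_subset r A C"
  using bounded_in_Un[OF assms(1) assms(2,3)[unfolded almost_subset_def]]
  unfolding almost_subset_def by (rule bounded_in_subset[rotated]) blast

lemma ultrafilter_Diff_finite:
  assumes "ultrafilter_on K U" "\<forall>\<alpha>\<in>K. {\<alpha>} \<notin> U" "finite F"
  shows "K - F \<in> U"
  using assms(3)
proof (induction F rule: finite_induct)
  case empty
  then show ?case using assms(1) unfolding ultrafilter_on_def by simp
next
  case (insert \<alpha> F)
  show ?case
  proof (cases "\<alpha> \<in> K")
    case True
    have compl: "X \<subseteq> K \<Longrightarrow> X \<in> U \<or> K - X \<in> U" and inter: "X \<in> U \<Longrightarrow> Y \<in> U \<Longrightarrow> X \<inter> Y \<in> U"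
      for X Y using assms(1) unfolding ultrafilter_on_def by blast+
    have "K - {\<alpha>} \<in> U" using compl[of "{\<alpha>}"] True assms(2) by blast
    then have "(K - F) \<inter> (K - {\<alpha>}) \<in> U" using insert.IH inter by blast
    moreover have "K - insert \<alpha> F = (K - F) \<inter> (K - {\<alpha>})" by blast
    ultimately show ?thesis by simp
  next
    case False
    then have "K - insert \<alpha> F = K - F" by blast
    then show ?thesis using insert.IH by simp
  qed
qed

lemma nonprincipal_ultrafilter_infinite:
  assumes "ultrafilter_on K U" "\<forall>\<alpha>\<in>K. {\<alpha>} \<notin> U"
  shows "infinite K"
proof
  assume "finite K"
  then have "{} \<in> U" using ultrafilter_Diff_finite[OF assms] by fastforce
  then show False using assms(1) unfolding ultrafilter_on_def by simp
qed

lemma normal_ultrafilterD: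
  assumes "normal_ultrafilter r U"
  shows "Card_order r" "Well_order r" "ultrafilter_on (Field r) U" "infinite (Field r)"
    "\<And>X. (\<forall>\<beta>\<in>Field r. X \<beta> \<in> U) \<Longrightarrow> diag_inter r X \<in> U"
proof -
  show card: "Card_order r" and uf: "ultrafilter_on (Field r) U"
    and "\<And>X. (\<forall>\<beta>\<in>Field r. X \<beta> \<in> U) \<Longrightarrow> diag_inter r X \<in> U"
    using assms unfolding normal_ultrafilter_def by blast+
  show "Well_order r" using card by (rule card_order_on_well_order_on)
  have "\<forall>\<alpha>\<in>Field r. {\<alpha>} \<notin> U"
    using assms unfolding normal_ultrafilter_def nonprincipal_def by blast
  then show "infinite (Field r)" by (rule nonprincipal_ultrafilter_infinite[OF uf])
qed

lemma almost_subset_diag_inter: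
  assumes "Card_order r" "infinite (Field r)" "\<gamma> \<in> Field r"
  shows "almost_subset r (diag_inter r X) (X \<gamma>)"
proof -
  have "\<alpha> \<in> under r \<gamma>" if "\<alpha> \<in> Field r" "\<not> ((\<gamma>, \<alpha>) \<in> r \<and> \<gamma> \<noteq> \<alpha>)" for \<alpha>
    using wo_rel.in_notinI[unfolded wo_rel_def, OF card_order_on_well_order_on[OF assms(1)]]
      that assms(3) unfolding under_def by blast
  then have "diag_inter r X - X \<gamma> \<subseteq> under r \<gamma>"
    unfolding diag_inter_def by blast
  then show ?thesis
    unfolding almost_subset_def using bounded_in_subset bounded_in_under[OF assms] by blast
qed

lemma normal_ultrafilter_small_pseudo_intersection:
  assumes "normal_ultrafilter r U" "F \<subseteq> U" "|F| \<le>o |Field r|"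
  shows "\<exists>D\<in>U. \<forall>Y\<in>F. almost_subset r D Y"
proof (cases "F = {}")
  case True
  have "Field r \<in> U" using normal_ultrafilterD(3)[OF assms(1)] unfolding ultrafilter_on_def by simp
  then show ?thesis using True by blast
next
  case False
  then obtain X where X: "X ` Field r = F" using card_of_ordLeq2[OF False] assms(3) by metis
  have "diag_inter r X \<in> U"
    by (rule normal_ultrafilterD(5)[OF assms(1)]) (use X assms(2) in blast)
  moreover have "almost_subset r (diag_inter r X) Y" if "Y \<in> F" for Y
  proof -
    obtain \<gamma> where \<gamma>: "\<gamma> \<in> Field r" "Y = X \<gamma>" using X \<open>Y \<in> F\<close> by blast
    show ?thesis
      unfolding \<gamma>(2) using almost_subset_diag_inter[OF normal_ultrafilterD(1,4)[OF assms(1)] \<gamma>(1)] .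
  qed
  ultimately show ?thesis by blast
qed

definition cofinal_in :: "'a rel \<Rightarrow> 'a set \<Rightarrow> 'a set \<Rightarrow> bool" where
  "cofinal_in l A K \<longleftrightarrow> K \<subseteq> A \<and> (\<forall>i\<in>A. \<exists>j\<in>K. (i, j) \<in> l)"

text \<open>The set below consists of the records of the enumeration of \<open>J\<close> along \<open>c\<close>.\<close>

lemma cofinal_in_records:
  assumes "Well_order l" "Well_order c" "Field c = J" "A \<subseteq> Field l" "cofinal_in l A J"
  shows "cofinal_in l A {x\<in>J. underS c x \<subseteq> underS l x}"
  unfolding cofinal_in_def
proof (intro conjI ballI)
  show "{x\<in>J. underS c x \<subseteq> underS l x} \<subseteq> A" using assms(5) unfolding cofinal_in_def by blast
next
  fix i assume "i \<in> A"
  let ?S = "{x\<in>J. (i, x) \<in> l}"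
  obtain x where x: "x \<in> ?S" using assms(5) \<open>i \<in> A\<close> unfolding cofinal_in_def by blast
  have wf: "wf (c - Id)" using assms(2) by (simp add: wo_rel.WF wo_rel_def)
  obtain z where z: "z \<in> ?S" and z_min: "\<And>y. (y, z) \<in> c - Id \<Longrightarrow> y \<notin> ?S"
    using wfE_min[OF wf x] by blast
  have "y \<in> underS l z" if "y \<in> underS c z" for y
  proof -
    have "y \<in> J" using that unfolding assms(3)[symmetric] underS_def Field_def by blast
    then have "(i, y) \<notin> l" using z_min[of y] that unfolding underS_def by blast
    moreover have "i \<in> Field l" "y \<in> Field l"
      using \<open>i \<in> A\<close> \<open>y \<in> J\<close> assms(4,5) unfolding cofinal_in_def by blast+
    ultimately have "(y, i) \<in> l" using wo_rel.in_notinI[unfolded wo_rel_def, OF assms(1)] by blast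
    then have "(y, z) \<in> l" using z wo_rel.TRANS assms(1) unfolding wo_rel_def trans_def by blast
    moreover have "y \<noteq> z" using \<open>(i, y) \<notin> l\<close> z by blast
    ultimately show ?thesis unfolding underS_def by blast
  qed
  then show "\<exists>j\<in>{x\<in>J. underS c x \<subseteq> underS l x}. (i, j) \<in> l" using z by blast
qed

lemma exists_minimal_cofinal_in:
  assumes "Well_order l" "A \<subseteq> Field l"
  shows "\<exists>R. cofinal_in l A R \<and> (\<forall>K. cofinal_in l A K \<longrightarrow> |R| \<le>o |K| )
    \<and> (\<forall>x\<in>R. |R \<inter> underS l x| <o |R| )"
proof -
  have "cofinal_in l A A"
    using assms wo_rel.REFL unfolding cofinal_in_def wo_rel_def refl_on_def by blast
  then have "{|K| | K. cofinal_in l A K} \<noteq> {}" by blast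
  then obtain J where J: "cofinal_in l A J" and J_min: "\<And>K. cofinal_in l A K \<Longrightarrow> |J| \<le>o |K|"
    using exists_minim_Card_order[of "{|K| | K. cofinal_in l A K}"] card_of_Card_order by blast
  define R where "R = {x\<in>J. underS |J| x \<subseteq> underS l x}"
  have R: "cofinal_in l A R"
    unfolding R_def
    by (rule cofinal_in_records[OF assms(1) card_of_Well_order Field_card_of assms(2) J])
  have "R \<subseteq> J" unfolding R_def by blast
  then have R_min: "|R| \<le>o |K|" if "cofinal_in l A K" for K
    using ordLeq_transitive[OF card_of_mono1 J_min[OF that]] by blast
  have "|R \<inter> underS l x| <o |R|" if "x \<in> R" for x
  proof -
    have "R \<inter> underS l x \<subseteq> underS |J| x"
    proof
      fix y assume y: "y \<in> R \<inter> underS l x"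
      show "y \<in> underS |J| x"
      proof (rule ccontr)
        assume "y \<notin> underS |J| x"
        moreover have "x \<in> Field |J|" "y \<in> Field |J|" "y \<noteq> x"
          using that y \<open>R \<subseteq> J\<close> unfolding Field_card_of underS_def by blast+
        ultimately have "(y, x) \<notin> |J|" unfolding underS_def by blast
        then have "(x, y) \<in> |J|"
          by (rule wo_rel.in_notinI[unfolded wo_rel_def, OF card_of_Well_order disjI1 _ _]) fact+
        then have "x \<in> underS |J| y" using \<open>y \<noteq> x\<close> unfolding underS_def by blast
        then have "(x, y) \<in> l" "(y, x) \<in> l" "x \<noteq> y"
          using y unfolding R_def underS_def by blast+
        then show False using assms(1) wo_rel.ANTISYM unfolding wo_rel_def antisym_def by blast
      qed
    qed
    then have "|R \<inter> underS l x| \<le>o |underS |J| x|" by (rule card_of_mono1)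
    moreover have "x \<in> Field |J|" using that \<open>R \<subseteq> J\<close> unfolding Field_card_of by blast
    then have "|underS |J| x| <o |J|" by (rule card_of_underS[OF card_of_Card_order])
    ultimately show ?thesis using ordLeq_ordLess_trans ordLess_ordLeq_trans J_min[OF R] by blast
  qed
  then show ?thesis using R R_min by blast
qed

lemma cofinal_in_large_subset:
  assumes "Well_order l" "A \<subseteq> Field l" "cofinal_in l A R" "\<forall>x\<in>R. |R \<inter> underS l x| <o |R|"
    and "K \<subseteq> R" "\<not> |K| <o |R|"
  shows "cofinal_in l A K"
  unfolding cofinal_in_def
proof (intro conjI ballI)
  show "K \<subseteq> A" using assms(3,5) unfolding cofinal_in_def by blast
next
  fix i assume "i \<in> A"
  then obtain j where j: "j \<in> R" "(i, j) \<in> l" using assms(3) unfolding cofinal_in_def by blast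
  show "\<exists>k\<in>K. (i, k) \<in> l"
  proof (rule ccontr)
    assume below: "\<not> (\<exists>k\<in>K. (i, k) \<in> l)"
    have "K \<subseteq> R \<inter> underS l j"
    proof
      fix k assume "k \<in> K"
      then have "(i, k) \<notin> l" "k \<in> Field l"
        using below assms(2,3,5) unfolding cofinal_in_def by blast+
      then have "(k, i) \<in> l"
        using wo_rel.in_notinI[unfolded wo_rel_def, OF assms(1)] \<open>i \<in> A\<close> assms(2) by blast
      then have "(k, j) \<in> l" using j(2) assms(1) wo_rel.TRANS unfolding wo_rel_def trans_def by blast
      moreover have "k \<noteq> j" using \<open>(i, k) \<notin> l\<close> j(2) by blast
      ultimately show "k \<in> R \<inter> underS l j" using \<open>k \<in> K\<close> assms(5) unfolding underS_def by blast
    qed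
    then have "|K| <o |R|" using ordLeq_ordLess_trans[OF card_of_mono1] assms(4) j(1) by blast
    then show False using assms(6) by blast
  qed
qed

lemma cofinal_in_fibre:
  assumes "Well_order l" "A \<subseteq> Field l" "cofinal_in l A R" "\<forall>K. cofinal_in l A K \<longrightarrow> |R| \<le>o |K|"
    and "|f ` R| <o |R|"
  shows "\<exists>y\<in>f ` R. cofinal_in l A {j\<in>R. f j = y}"
proof (rule ccontr)
  assume "\<not> ?thesis"
  then have "\<forall>y\<in>f ` R. \<exists>i\<in>A. \<forall>j\<in>R. f j = y \<longrightarrow> (i, j) \<notin> l"
    using assms(3) unfolding cofinal_in_def by blast
  then obtain h where h: "\<And>y. y \<in> f ` R \<Longrightarrow> h y \<in> A \<and> (\<forall>j\<in>R. f j = y \<longrightarrow> (h y, j) \<notin> l)"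
    by metis
  have "cofinal_in l A (h ` f ` R)"
    unfolding cofinal_in_def
  proof (intro conjI ballI)
    show "h ` f ` R \<subseteq> A" using h by blast
  next
    fix i assume "i \<in> A"
    then obtain j where j: "j \<in> R" "(i, j) \<in> l" using assms(3) unfolding cofinal_in_def by blast
    then have "(h (f j), j) \<notin> l" "h (f j) \<in> Field l" "j \<in> Field l"
      using h[of "f j"] assms(2,3) unfolding cofinal_in_def by blast+
    then have "(j, h (f j)) \<in> l" using wo_rel.in_notinI[unfolded wo_rel_def, OF assms(1)] by blast
    then have "(i, h (f j)) \<in> l" using j(2) assms(1) wo_rel.TRANS unfolding wo_rel_def trans_def by blast
    then show "\<exists>k\<in>h ` f ` R. (i, k) \<in> l" using j(1) by blast
  qed
  then have "|R| \<le>o |h ` f ` R|" using assms(4) by blast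
  also have "|h ` f ` R| \<le>o |f ` R|" by (rule card_of_image)
  finally have "|R| \<le>o |f ` R|" .
  then show False using assms(5) not_ordLess_ordLeq by blast
qed

definition almost_decreasing :: "'k rel \<Rightarrow> 'l rel \<Rightarrow> 'l set \<Rightarrow> ('l \<Rightarrow> 'k set) \<Rightarrow> bool" where
  "almost_decreasing r l A B \<longleftrightarrow> (\<forall>i\<in>A. \<forall>j\<in>A. (i, j) \<in> l \<longrightarrow> almost_subset r (B j) (B i))"

lemma almost_decreasing_cofinal_in:
  assumes "Well_order r" "almost_decreasing r l A B" "cofinal_in l A K"
    and "\<forall>j\<in>K. almost_subset r D (B j)"
  shows "\<forall>i\<in>A. almost_subset r D (B i)"
proof
  fix i assume "i \<in> A"
  then obtain j where "j \<in> K" "j \<in> A" "(i, j) \<in> l" using assms(3) unfolding cofinal_in_def by blast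
  then have "almost_subset r (B j) (B i)" using assms(2) \<open>i \<in> A\<close> unfolding almost_decreasing_def by blast
  then show "almost_subset r D (B i)" using almost_subset_trans[OF assms(1)] assms(4) \<open>j \<in> K\<close> by blast
qed

lemma Gal_ordIso:
  assumes "Gal U mu lam" "mu =o mu'" "lam =o lam'"
  shows "Gal U mu' lam'"
  unfolding Gal_def
proof (intro allI impI)
  fix C assume C: "C \<subseteq> U \<and> |C| =o lam'"
  then have "|C| =o lam" using ordIso_transitive[OF _ ordIso_symmetric[OF assms(3)]] by blast
  then obtain E where "E \<subseteq> C" "|E| =o mu" "\<Inter>E \<in> U"
    using assms(1)[unfolded Gal_def, rule_format, of C] C by blast
  then show "\<exists>E. E \<subseteq> C \<and> |E| =o mu' \<and> \<Inter>E \<in> U" using ordIso_transitive[OF _ assms(2)] by blast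
qed

text \<open>Gal is assumed only for orders on \<open>'k set\<close>, so \<open>K\<close> is first copied into \<open>Pow (Field r)\<close>.\<close>

lemma Gal_card_of_between:
  fixes r :: "'k rel" and l :: "'l rel" and K :: "'a set"
  assumes "Card_order r" "l =o |Pow (Field r)|"
    and "\<forall>d :: 'k set rel. Card_order d \<and> cardSuc r \<le>o d \<and> d <o l \<longrightarrow> Gal U d d"
    and "r <o |K|" "|K| <o l"
  shows "Gal U |K| |K|"
proof -
  have "|K| \<le>o |Pow (Field r)|" using ordLess_imp_ordLeq[OF ordLess_ordIso_trans[OF assms(5,2)]] .
  then obtain f where "inj_on f K" "f ` K \<subseteq> Pow (Field r)" using card_of_ordLeq by metis
  then have iso: "|K| =o |f ` K|" using card_of_ordIsoI[OF inj_on_imp_bij_betw] by blast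
  have "cardSuc r \<le>o |f ` K|"
    using cardSuc_least[OF assms(1) card_of_Card_order ordLess_ordIso_trans[OF assms(4) iso]] .
  moreover have "|f ` K| <o l" using ordIso_ordLess_trans[OF ordIso_symmetric[OF iso] assms(5)] .
  ultimately have "Gal U |f ` K| |f ` K|" using assms(3) card_of_Card_order by blast
  then show ?thesis using Gal_ordIso ordIso_symmetric[OF iso] by blast
qed

lemma Gal_cofinal_subfamily:
  assumes "Well_order l" "A \<subseteq> Field l" "cofinal_in l A R" "\<forall>x\<in>R. |R \<inter> underS l x| <o |R|"
    and "Gal U |R| |R|" "B ` R \<subseteq> U" "|B ` R| =o |R|"
  shows "\<exists>D\<in>U. \<exists>K. cofinal_in l A K \<and> (\<forall>j\<in>K. D \<subseteq> B j)"
proof -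
  obtain E where E: "E \<subseteq> B ` R" "|E| =o |R|" "\<Inter>E \<in> U"
    using assms(5)[unfolded Gal_def, rule_format, of "B ` R"] assms(6,7) by blast
  define K where "K = {j\<in>R. B j \<in> E}"
  have "E \<subseteq> B ` K" using E(1) unfolding K_def by blast
  then have "|E| \<le>o |K|" using ordLeq_transitive[OF card_of_mono1 card_of_image] by blast
  then have large: "\<not> |K| <o |R|" using E(2) not_ordLess_ordIso ordLeq_ordLess_trans by blast
  have "K \<subseteq> R" unfolding K_def by blast
  then have "cofinal_in l A K" by (rule cofinal_in_large_subset[OF assms(1-4) _ large])
  moreover have "\<forall>j\<in>K. \<Inter>E \<subseteq> B j" unfolding K_def by blast
  ultimately show ?thesis using E(3) by blast
qed

lemma almost_decreasing_pseudo_intersection: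
  assumes NU: "normal_ultrafilter r U" and "Well_order l" "A \<subseteq> Field l"
    and B: "\<forall>i\<in>A. B i \<in> U" "almost_decreasing r l A B"
    and Gal: "\<And>K. K \<subseteq> A \<Longrightarrow> r <o |K| \<Longrightarrow> Gal U |K| |K|"
  shows "\<exists>D\<in>U. \<forall>i\<in>A. almost_subset r D (B i)"
proof -
  note U = normal_ultrafilterD[OF NU]
  have ne: "Field r \<noteq> {}" using U(4) by auto
  obtain R where R: "cofinal_in l A R" and R_min: "\<forall>K. cofinal_in l A K \<longrightarrow> |R| \<le>o |K|"
    and R_seg: "\<forall>x\<in>R. |R \<inter> underS l x| <o |R|"
    using exists_minimal_cofinal_in[OF assms(2,3)] by blast
  have "R \<subseteq> A" using R unfolding cofinal_in_def by blast
  then have BR: "B ` R \<subseteq> U" using B(1) by blast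
  have "\<exists>D\<in>U. \<exists>K. cofinal_in l A K \<and> (\<forall>j\<in>K. almost_subset r D (B j))"
  proof (cases "|R| \<le>o |Field r|")
    case True
    then have "|B ` R| \<le>o |Field r|" using ordLeq_transitive[OF card_of_image] by blast
    then show ?thesis using normal_ultrafilter_small_pseudo_intersection[OF NU BR] R by blast
  next
    case False
    then have "r <o |R|"
      using ordIso_ordLess_trans[OF ordIso_symmetric[OF card_of_Field_ordIso[OF U(1)]]]
        not_ordLeq_iff_ordLess[OF card_of_Well_order card_of_Well_order] by blast
    have "\<exists>D\<in>U. \<exists>K. cofinal_in l A K \<and> (\<forall>j\<in>K. D \<subseteq> B j)"
    proof (cases "|B ` R| <o |R|")
      case True
      then obtain Y where "Y \<in> B ` R" "cofinal_in l A {j\<in>R. B j = Y}"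
        using cofinal_in_fibre[OF assms(2,3) R R_min] by blast
      then show ?thesis using BR by blast
    next
      case False
      then have "|B ` R| =o |R|" using card_of_image ordLeq_iff_ordLess_or_ordIso by blast
      then show ?thesis
        using Gal_cofinal_subfamily[OF assms(2,3) R R_seg Gal[OF \<open>R \<subseteq> A\<close> \<open>r <o |R|\<close>] BR] by blast
    qed
    then show ?thesis using subset_imp_almost_subset[OF ne] by meson
  qed
  then show ?thesis using almost_decreasing_cofinal_in[OF U(2) B(2)] by blast
qed

lemma exists_almost_decreasing_refinement:
  fixes r :: "'k rel" and l :: "'l rel" and X :: "'l \<Rightarrow> 'k set"
  assumes "Well_order r" "Field r \<noteq> {}" "Well_order l"
    and inter: "\<And>Y Z. Y \<in> U \<Longrightarrow> Z \<in> U \<Longrightarrow> Y \<inter> Z \<in> U"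
    and X: "\<And>\<alpha>. \<alpha> \<in> Field l \<Longrightarrow> X \<alpha> \<in> U"
    and pseudo: "\<And>\<alpha> B. \<alpha> \<in> Field l \<Longrightarrow> \<forall>i\<in>underS l \<alpha>. B i \<in> U
      \<Longrightarrow> almost_decreasing r l (underS l \<alpha>) B \<Longrightarrow> \<exists>D\<in>U. \<forall>i\<in>underS l \<alpha>. almost_subset r D (B i)"
  shows "\<exists>B. (\<forall>\<alpha>\<in>Field l. B \<alpha> \<in> U \<and> almost_subset r (B \<alpha>) (X \<alpha>))
    \<and> almost_decreasing r l (Field l) B"
proof -
  have wf: "wf (l - Id)" using assms(3) by (simp add: wo_rel.WF wo_rel_def)
  let ?good = "\<lambda>B \<alpha> D. D \<in> U \<and> (\<forall>\<beta>\<in>underS l \<alpha>. almost_subset r D (B \<beta>)) \<and> almost_subset r D (X \<alpha>)"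
  define B where "B = wfrec (l - Id) (\<lambda>B \<alpha>. SOME D. ?good B \<alpha> D)"
  have B_eq: "B \<alpha> = (SOME D. ?good B \<alpha> D)" for \<alpha>
    unfolding B_def by (subst wfrec[OF wf]) (simp add: cut_def underS_def)
  have good: "?good B \<alpha> (B \<alpha>)" if "\<alpha> \<in> Field l" for \<alpha>
    using that
  proof (induction \<alpha> rule: wf_induct_rule[OF wf])
    case (1 \<alpha>)
    have IH: "?good B \<beta> (B \<beta>)" if "\<beta> \<in> underS l \<alpha>" for \<beta>
      using 1(1) that underS_Field[of _ l \<alpha>] unfolding underS_def by blast
    have "almost_decreasing r l (underS l \<alpha>) B"
      unfolding almost_decreasing_def
    proof (intro ballI impI)
      fix i j assume "i \<in> underS l \<alpha>" "j \<in> underS l \<alpha>" "(i, j) \<in> l"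
      show "almost_subset r (B j) (B i)"
      proof (cases "i = j")
        case True
        then show ?thesis using subset_imp_almost_subset[OF assms(2)] by blast
      next
        case False
        then show ?thesis using IH[OF \<open>j \<in> underS l \<alpha>\<close>] \<open>(i, j) \<in> l\<close> unfolding underS_def by blast
      qed
    qed
    then obtain D where D: "D \<in> U" "\<forall>i\<in>underS l \<alpha>. almost_subset r D (B i)"
      using pseudo[OF 1(2)] IH by blast
    have "?good B \<alpha> (D \<inter> X \<alpha>)"
      using inter[OF D(1) X[OF 1(2)]] D(2)
        almost_subset_trans[OF assms(1) subset_imp_almost_subset[OF assms(2) Int_lower1]]
        subset_imp_almost_subset[OF assms(2) Int_lower2] by blast
    then show ?case unfolding B_eq[of \<alpha>] by (rule someI)
  qed
  have "almost_decreasing r l (Field l) B"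
    unfolding almost_decreasing_def
  proof (intro ballI impI)
    fix i j assume "i \<in> Field l" "j \<in> Field l" "(i, j) \<in> l"
    then show "almost_subset r (B j) (B i)"
      using good[of j] subset_imp_almost_subset[OF assms(2)] unfolding underS_def by blast
  qed
  then show ?thesis using good by blast
qed

lemma ultrafilter_enumeration:
  assumes "Card_order l" "|Pow K| \<le>o l" "ultrafilter_on K U"
  shows "\<exists>X. X ` Field l = U"
proof -
  have "U \<subseteq> Pow K" "K \<in> U" using assms(3) unfolding ultrafilter_on_def by blast+
  have "|U| \<le>o |Field l|"
    using ordLeq_ordIso_trans[OF ordLeq_transitive[OF card_of_mono1[OF \<open>U \<subseteq> Pow K\<close>] assms(2)]
        ordIso_symmetric[OF card_of_Field_ordIso[OF assms(1)]]] .
  moreover have "U \<noteq> {}" using \<open>K \<in> U\<close> by blast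
  ultimately show ?thesis using card_of_ordLeq2 by metis
qed

theorem proposition5p7:
  fixes r :: "'k rel" and U :: "'k set set" and l :: "'l rel"
  assumes "normal_ultrafilter r U"
    and "Card_order l"
    and "(l, card_of (Pow (Field r))) \<in> ordIso"
    and "\<forall>d :: 'k set rel. Card_order d \<and> (cardSuc r, d) \<in> ordLeq \<and> (d, l) \<in> ordLess
           \<longrightarrow> Gal U d d"
  shows "\<exists>B :: 'l \<Rightarrow> 'k set. strong_generating_seq r U l B"
proof -
  note U = normal_ultrafilterD[OF assms(1)]
  have l: "Well_order l" using assms(2) by (rule card_order_on_well_order_on)
  have inter: "\<And>Y Z. Y \<in> U \<Longrightarrow> Z \<in> U \<Longrightarrow> Y \<inter> Z \<in> U" using U(3) unfolding ultrafilter_on_def by blast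
  obtain X where X: "X ` Field l = U"
    using ultrafilter_enumeration[OF assms(2) ordIso_imp_ordLeq[OF ordIso_symmetric[OF assms(3)]] U(3)] by blast
  have pseudo: "\<exists>D\<in>U. \<forall>i\<in>underS l \<alpha>. almost_subset r D (B i)"
    if "\<alpha> \<in> Field l" "\<forall>i\<in>underS l \<alpha>. B i \<in> U" "almost_decreasing r l (underS l \<alpha>) B" for \<alpha> B
  proof (rule almost_decreasing_pseudo_intersection[OF assms(1) l Order_Relation.underS_Field that(2,3)])
    fix K assume K: "K \<subseteq> underS l \<alpha>" "r <o |K|"
    have "|K| <o l" using ordLeq_ordLess_trans[OF card_of_mono1[OF K(1)] card_of_underS[OF assms(2) that(1)]] .
    then show "Gal U |K| |K|" by (rule Gal_card_of_between[OF U(1) assms(3,4) K(2)])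
  qed
  have "Field r \<noteq> {}" using U(4) by auto
  moreover have "\<And>\<alpha>. \<alpha> \<in> Field l \<Longrightarrow> X \<alpha> \<in> U" using X by blast
  ultimately obtain B where "\<forall>\<alpha>\<in>Field l. B \<alpha> \<in> U \<and> almost_subset r (B \<alpha>) (X \<alpha>)"
    and "almost_decreasing r l (Field l) B"
    using exists_almost_decreasing_refinement[OF U(2) _ l inter _ pseudo] by blast
  then show ?thesis using X unfolding strong_generating_seq_def almost_decreasing_def by blast
qed

end
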